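(* Let $G=(V,E)$ be a graph, $c\ge1$, $\epsilon\in[0,1/3)$, let $\kappa(G)=(V,\kappa(E))$ be an $(\epsilon,c)$-kernel of $G$ with tight nodes $\kappa_T(V)$, and let $M$ be a maximal matching in $\kappa(G)$. Let $F_T$ be the set of tight nodes that are not matched in $M$. Then $|F_T|\le(2+6\epsilon)|M|$.
   Context: Let $\mathcal N_v$ denote the set of neighbors of $v$ in $G$. A subgraph $\kappa(G)=(V,\kappa(E))$ with $\kappa(E)\subseteq E$ is given, together with a partition of $V$ into tight nodes $\kappa_T(V)$ and slack nodes $\kappa_S(V)$. For $v\in V$ let $\kappa(\mathcal N_v)=\{u\in\mathcal N_v:(u,v)\in\kappa(E)\}$ (the friends of $v$). For $c\ge1$ and $\epsilon\in[0,1/3)$, $\kappa(G)$ is an $(\epsilon,c)$-kernel of $G$ (w.r.t. this partition) iff: (i) $|\kappa(\mathcal N_v)|\le(1+\epsilon)c$ for all $v\in V$; (ii) $|\kappa(\mathcal N_v)|\ge(1-\epsilon)c$ for all $v\in\kappa_T(V)$; (iii) for all $u,v\in\kappa_S(V)$, if $(u,v)\in E$ then $(u,v)\in\kappa(E)$. *)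

theory Defs
  imports Complex_Main
begin

definition simple_graph :: "'a set \<Rightarrow> 'a set set \<Rightarrow> bool" where
  "simple_graph V E \<longleftrightarrow> finite V \<and>
     (\<forall>e\<in>E. \<exists>u v. e = {u, v} \<and> u \<noteq> v \<and> u \<in> V \<and> v \<in> V)"

definition nbrs :: "'a set set \<Rightarrow> 'a \<Rightarrow> 'a set" where
  "nbrs E v = {u. {u, v} \<in> E}"

text \<open>(eps,c)-kernel (V, KE) of G = (V, E) w.r.t. the partition of V into tight nodes T
  and slack nodes S.\<close>
definition is_kernel :: "'a set \<Rightarrow> 'a set set \<Rightarrow> 'a set set \<Rightarrow> 'a set \<Rightarrow> 'a set \<Rightarrow> real \<Rightarrow> real \<Rightarrow> bool" where
  "is_kernel V E KE T S eps c \<longleftrightarrow>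
     KE \<subseteq> E \<and> T \<union> S = V \<and> T \<inter> S = {} \<and>
     (\<forall>v\<in>V. real (card (nbrs KE v)) \<le> (1 + eps) * c) \<and>
     (\<forall>v\<in>T. real (card (nbrs KE v)) \<ge> (1 - eps) * c) \<and>
     (\<forall>u\<in>S. \<forall>v\<in>S. {u, v} \<in> E \<longrightarrow> {u, v} \<in> KE)"

definition is_matching :: "'a set set \<Rightarrow> 'a set set \<Rightarrow> bool" where
  "is_matching E M \<longleftrightarrow> M \<subseteq> E \<and> (\<forall>e1\<in>M. \<forall>e2\<in>M. e1 \<noteq> e2 \<longrightarrow> e1 \<inter> e2 = {})"

definition is_maximal_matching :: "'a set set \<Rightarrow> 'a set set \<Rightarrow> bool" where
  "is_maximal_matching E M \<longleftrightarrow> is_matching E M \<and>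
     (\<forall>M'. is_matching E M' \<and> M \<subseteq> M' \<longrightarrow> M' = M)"

end

theory Submission
  imports Defs
begin

text \<open>Every neighbour of an unmatched tight node is matched (maximality), so counting kernel
  edges between the unmatched tight nodes F and the matched nodes W from both sides gives
  \<open>|F|(1 - \<epsilon>)c \<le> |W|(1 + \<epsilon>)c \<le> 2|M|(1 + \<epsilon>)c\<close>; for \<open>\<epsilon> < 1/3\<close> the ratio
  \<open>2(1 + \<epsilon>)/(1 - \<epsilon>)\<close> is at most \<open>2 + 6\<epsilon>\<close>.\<close>

lemma simple_graph_edge:
  assumes "simple_graph V E" "e \<in> E"
  shows "e \<subseteq> V" "card e = 2"
  using assms unfolding simple_graph_def by auto

lemma simple_graph_mono:
  assumes "simple_graph V E" "E' \<subseteq> E"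
  shows "simple_graph V E'"
  using assms unfolding simple_graph_def by blast

lemma simple_graph_finite_edges:
  assumes "simple_graph V E"
  shows "finite E"
proof -
  have "E \<subseteq> Pow V" using simple_graph_edge(1)[OF assms] by blast
  thus ?thesis using assms unfolding simple_graph_def by (simp add: finite_subset)
qed

lemma simple_graph_nbrs_subset:
  assumes "simple_graph V E"
  shows "nbrs E v \<subseteq> V"
  using assms simple_graph_edge(1) unfolding nbrs_def by blast

lemma card_Union_le_twice_card:
  assumes "finite M" "\<And>e. e \<in> M \<Longrightarrow> card e \<le> 2"
  shows "card (\<Union>M) \<le> 2 * card M"
proof -
  have "card (\<Union>M) \<le> (\<Sum>e\<in>M. card e)" by (rule card_Union_le_sum_card)
  also have "\<dots> \<le> (\<Sum>e\<in>M. 2)" using assms(2) by (rule sum_mono)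
  finally show ?thesis by simp
qed

lemma nbrs_unmatched_subset_matched:
  assumes "is_maximal_matching E M" "v \<notin> \<Union>M"
  shows "nbrs E v \<subseteq> \<Union>M"
proof
  fix u assume "u \<in> nbrs E v"
  hence uv: "{u, v} \<in> E" by (simp add: nbrs_def)
  show "u \<in> \<Union>M"
  proof (rule ccontr)
    assume "u \<notin> \<Union>M"
    with assms uv have "is_matching E (insert {u, v} M)"
      unfolding is_maximal_matching_def is_matching_def by blast
    with assms(1) have "insert {u, v} M = M"
      unfolding is_maximal_matching_def by blast
    with assms(2) show False by blast
  qed
qed

lemma card_nbrs_Int_eq_sum:
  assumes "finite B"
  shows "card (nbrs E v \<inter> B) = (\<Sum>u\<in>B. if {u, v} \<in> E then 1 else 0)"
proof -
  have "nbrs E v \<inter> B = {u \<in> B. {u, v} \<in> E}" by (auto simp: nbrs_def)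
  thus ?thesis using assms by (simp add: sum.If_cases Int_def)
qed

lemma sum_card_nbrs_Int_swap:
  assumes "finite A" "finite B"
  shows "(\<Sum>v\<in>A. card (nbrs E v \<inter> B)) = (\<Sum>u\<in>B. card (nbrs E u \<inter> A))"
proof -
  have "(\<Sum>v\<in>A. card (nbrs E v \<inter> B)) = (\<Sum>v\<in>A. \<Sum>u\<in>B. if {u, v} \<in> E then 1 else 0)"
    using assms(2) by (simp add: card_nbrs_Int_eq_sum)
  also have "\<dots> = (\<Sum>u\<in>B. \<Sum>v\<in>A. if {v, u} \<in> E then 1 else 0)"
    by (subst sum.swap) (simp add: insert_commute)
  also have "\<dots> = (\<Sum>u\<in>B. card (nbrs E u \<inter> A))"
    using assms(1) by (simp add: card_nbrs_Int_eq_sum)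
  finally show ?thesis .
qed

lemma sum_degree_unmatched_le:
  fixes d :: real
  assumes "simple_graph V E" "is_maximal_matching E M"
    and "F \<subseteq> V" "F \<inter> \<Union>M = {}" "\<And>u. u \<in> V \<Longrightarrow> real (card (nbrs E u)) \<le> d" "0 \<le> d"
  shows "(\<Sum>v\<in>F. real (card (nbrs E v))) \<le> 2 * real (card M) * d"
proof -
  have M: "M \<subseteq> E" using assms(2) unfolding is_maximal_matching_def is_matching_def by blast
  have "finite V" using assms(1) unfolding simple_graph_def by blast
  have "\<Union>M \<subseteq> V" using M simple_graph_edge(1)[OF assms(1)] by blast
  have finite: "finite F" "finite (\<Union>M)" "\<And>v. finite (nbrs E v)"
    using assms(3) \<open>\<Union>M \<subseteq> V\<close> simple_graph_nbrs_subset[OF assms(1)] \<open>finite V\<close>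
    by (meson finite_subset)+
  have "card (\<Union>M) \<le> 2 * card M"
    using M simple_graph_finite_edges[OF assms(1)] simple_graph_edge(2)[OF assms(1)]
    by (intro card_Union_le_twice_card) (auto intro: finite_subset)
  have "\<And>v. v \<in> F \<Longrightarrow> nbrs E v \<inter> \<Union>M = nbrs E v"
    using nbrs_unmatched_subset_matched[OF assms(2)] assms(4) by blast
  hence "(\<Sum>v\<in>F. real (card (nbrs E v))) = (\<Sum>v\<in>F. real (card (nbrs E v \<inter> \<Union>M)))"
    by simp
  also have "\<dots> = (\<Sum>u\<in>\<Union>M. real (card (nbrs E u \<inter> F)))"
    using sum_card_nbrs_Int_swap[OF finite(1,2)] by (metis of_nat_sum)
  also have "\<dots> \<le> (\<Sum>u\<in>\<Union>M. d)"
  proof (rule sum_mono)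
    fix u assume "u \<in> \<Union>M"
    have "card (nbrs E u \<inter> F) \<le> card (nbrs E u)" by (rule card_mono[OF finite(3)]) blast
    thus "real (card (nbrs E u \<inter> F)) \<le> d"
      using assms(5) \<open>\<Union>M \<subseteq> V\<close> \<open>u \<in> \<Union>M\<close> by force
  qed
  also have "\<dots> \<le> 2 * real (card M) * d"
    using \<open>card (\<Union>M) \<le> 2 * card M\<close> assms(6) by (simp add: mult_right_mono)
  finally show ?thesis .
qed

lemma le_two_plus_six_eps_mul:
  fixes x y eps :: real
  assumes "x * (1 - eps) \<le> 2 * y * (1 + eps)" "0 \<le> eps" "eps < 1/3" "0 \<le> y"
  shows "x \<le> (2 + 6 * eps) * y"
proof -
  have "0 \<le> eps * (1 - 3 * eps)" using assms(2,3) by simp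
  hence "2 * (1 + eps) \<le> (2 + 6 * eps) * (1 - eps)" by (simp add: algebra_simps)
  hence "2 * (1 + eps) * y \<le> (2 + 6 * eps) * (1 - eps) * y"
    using assms(4) by (rule mult_right_mono)
  hence "x * (1 - eps) \<le> ((2 + 6 * eps) * y) * (1 - eps)"
    using assms(1) by (simp add: algebra_simps)
  thus ?thesis using assms(3) by (simp add: mult_le_cancel_right)
qed

theorem lemma3p12:
  fixes V T S :: "'a set" and E KE M :: "'a set set" and eps c :: real
  assumes "simple_graph V E"
    and "c \<ge> 1" and "0 \<le> eps" and "eps < 1/3"
    and "is_kernel V E KE T S eps c"
    and "is_maximal_matching KE M"
  shows "real (card {v \<in> T. v \<notin> \<Union>M}) \<le> (2 + 6 * eps) * real (card M)"
proof -
  define F where "F = {v \<in> T. v \<notin> \<Union>M}"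
  have KE: "KE \<subseteq> E" "T \<subseteq> V" "\<forall>v\<in>V. real (card (nbrs KE v)) \<le> (1 + eps) * c"
    "\<forall>v\<in>T. (1 - eps) * c \<le> real (card (nbrs KE v))"
    using assms(5) unfolding is_kernel_def by auto
  have "real (card F) * ((1 - eps) * c) \<le> (\<Sum>v\<in>F. real (card (nbrs KE v)))"
    using sum_mono[of F "\<lambda>_. (1 - eps) * c"] KE(4) unfolding F_def by auto
  also have "\<dots> \<le> 2 * real (card M) * ((1 + eps) * c)"
  proof (rule sum_degree_unmatched_le[OF simple_graph_mono[OF assms(1) KE(1)] assms(6)])
    show "F \<subseteq> V" "F \<inter> \<Union>M = {}" using KE(2) unfolding F_def by auto
    show "0 \<le> (1 + eps) * c" using assms(2,3) by simp
  qed (use KE(3) in blast)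
  finally have "real (card F) * (1 - eps) \<le> 2 * real (card M) * (1 + eps)"
    using assms(2) by (simp add: mult.assoc[symmetric])
  thus ?thesis
    unfolding F_def[symmetric] using le_two_plus_six_eps_mul assms(3,4) by simp
qed

end
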